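(* Let $K^2$ be the Klein bottle, with $\pi_1(K^2)\cong\langle a,b\mid aba^{-1}=b^{-1}\rangle$, and let $\rho:\pi_1(K^2)\to\mathrm{SL}_2(\mathbb C)$ be a representation. Then, up to conjugation, exactly one of the following holds: (1) $\rho(b)=\pm I$ and $\rho(a)$ is arbitrary; (2) $\rho(b)=\pm\begin{pmatrix}\lambda&0\\0&\lambda^{-1}\end{pmatrix}$ with $\lambda\neq\pm1$ and $\rho(a)=\pm\begin{pmatrix}0&1\\-1&0\end{pmatrix}$; (3) $\rho(b)=\pm\begin{pmatrix}1&1\\0&1\end{pmatrix}$ and $\rho(a)=\pm\begin{pmatrix}i&0\\0&-i\end{pmatrix}$. *)

theory Defs
  imports "HOL-Analysis.Analysis"
begin

definition mat2 :: "complex \<Rightarrow> complex \<Rightarrow> complex \<Rightarrow> complex \<Rightarrow> complex^2^2" where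
  "mat2 a b c d = (\<chi> i j. if i = 1 then (if j = 1 then a else b) else (if j = 1 then c else d))"

definition conjm :: "complex^2^2 \<Rightarrow> complex^2^2 \<Rightarrow> complex^2^2" where
  "conjm P M = P ** M ** matrix_inv P"

text \<open>The three normal forms for a pair (rho(a), rho(b)) = (A, B).\<close>
definition kb_case1 :: "complex^2^2 \<Rightarrow> complex^2^2 \<Rightarrow> bool" where
  "kb_case1 A B \<longleftrightarrow> (B = mat 1 \<or> B = - mat 1)"

definition kb_case2 :: "complex^2^2 \<Rightarrow> complex^2^2 \<Rightarrow> bool" where
  "kb_case2 A B \<longleftrightarrow> (\<exists>l. l \<noteq> 0 \<and> l \<noteq> 1 \<and> l \<noteq> -1 \<and>
      (B = mat2 l 0 0 (inverse l) \<or> B = - mat2 l 0 0 (inverse l)) \<and>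
      (A = mat2 0 1 (-1) 0 \<or> A = - mat2 0 1 (-1) 0))"

definition kb_case3 :: "complex^2^2 \<Rightarrow> complex^2^2 \<Rightarrow> bool" where
  "kb_case3 A B \<longleftrightarrow>
      (B = mat2 1 1 0 1 \<or> B = - mat2 1 1 0 1) \<and>
      (A = mat2 \<i> 0 0 (-\<i>) \<or> A = - mat2 \<i> 0 0 (-\<i>))"

definition up_to_conj :: "(complex^2^2 \<Rightarrow> complex^2^2 \<Rightarrow> bool) \<Rightarrow> complex^2^2 \<Rightarrow> complex^2^2 \<Rightarrow> bool" where
  "up_to_conj C A B \<longleftrightarrow> (\<exists>P. invertible P \<and> C (conjm P A) (conjm P B))"

end

theory Submission
  imports Defs
begin

(* Being +-I and the square of the trace are conjugation invariants of rho(b) that separate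
   the three normal forms.  For existence, rho(b) is conjugated to upper triangular form and the
   Klein bottle relation is used in the inverse-free shape b a b = a.  If the eigenvalues of rho(b)
   differ, rho(b) is diagonalizable and the relation forces rho(a) to be antidiagonal; otherwise
   rho(b) is +-I or conjugate to +-[[1,1],[0,1]], and then the relation forces rho(a) to be upper
   triangular with eigenvalues +-i.  A last conjugation commuting with rho(b), diagonal resp.
   unipotent, brings rho(a) to its normal form. *)

lemma matrix_inv_unique:
  fixes A X :: "'a::field^'n^'n"
  assumes "A ** X = mat 1"
  shows "matrix_inv A = X"
proof -
  have "X ** A = mat 1"
    using assms matrix_left_right_inverse by blast
  with assms have "matrix_inv A ** A = mat 1"
    unfolding matrix_inv_def by (metis (mono_tags, lifting) someI)
  then show ?thesis
    by (metis assms matrix_mul_assoc matrix_mul_lid matrix_mul_rid)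
qed

lemma matrix_inv_right:
  fixes A :: "'a::field^'n^'n"
  assumes "invertible A"
  shows "A ** matrix_inv A = mat 1"
  using assms matrix_inv_unique unfolding invertible_def by metis

lemma matrix_inv_left:
  fixes A :: "'a::field^'n^'n"
  assumes "invertible A"
  shows "matrix_inv A ** A = mat 1"
  using matrix_inv_right[OF assms] matrix_left_right_inverse by blast

lemma matrix_inv_mul:
  fixes A B :: "'a::field^'n^'n"
  assumes "invertible A" "invertible B"
  shows "matrix_inv (A ** B) = matrix_inv B ** matrix_inv A"
proof (rule matrix_inv_unique)
  have "A ** B ** (matrix_inv B ** matrix_inv A) = A ** (B ** matrix_inv B) ** matrix_inv A"
    by (simp add: matrix_mul_assoc)
  then show "A ** B ** (matrix_inv B ** matrix_inv A) = mat 1"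
    by (simp add: matrix_inv_right assms)
qed

lemma matrix_mul_mat_commute:
  fixes A :: "'a::comm_semiring_1^'n^'n"
  shows "A ** mat k = mat k ** A"
  by (simp add: matrix_matrix_mult_def mat_def vec_eq_iff if_distrib if_distribR mult.commute
      cong: if_cong)

lemma invertible_mat_1: "invertible (mat 1 :: 'a::semiring_1^'n^'n)"
  unfolding invertible_def by (metis matrix_mul_lid)

lemma uminus_mat: "- mat k = (mat (- k) :: 'a::ring_1^'n^'n)"
  by (simp add: mat_def vec_eq_iff)

lemma conjm_eqI:
  assumes "invertible P" "P ** M = X ** P"
  shows "conjm P M = X"
proof -
  have "conjm P M = X ** (P ** matrix_inv P)"
    unfolding conjm_def using assms(2) by (simp add: matrix_mul_assoc)
  then show ?thesis
    by (simp add: matrix_inv_right assms(1))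
qed

lemma conjm_conjm:
  assumes "invertible P" "invertible Q"
  shows "conjm Q (conjm P M) = conjm (Q ** P) M"
  unfolding conjm_def by (simp add: matrix_inv_mul assms matrix_mul_assoc)

lemma conjm_mul:
  assumes "invertible P"
  shows "conjm P (M ** N) = conjm P M ** conjm P N"
proof -
  have "conjm P M ** conjm P N = P ** M ** (matrix_inv P ** P) ** N ** matrix_inv P"
    unfolding conjm_def by (simp add: matrix_mul_assoc)
  then show ?thesis
    unfolding conjm_def by (simp add: matrix_inv_left assms matrix_mul_assoc)
qed

lemma det_conjm:
  assumes "invertible P"
  shows "det (conjm P M) = det M"
proof -
  have "det P * det (matrix_inv P) = 1"
    using matrix_inv_right[OF assms] by (metis det_mul det_I)
  then show ?thesis
    unfolding conjm_def by (simp add: det_mul)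
qed

lemma trace_conjm:
  assumes "invertible P"
  shows "trace (conjm P M) = trace M"
proof -
  have "trace (conjm P M) = trace (matrix_inv P ** (P ** M))"
    unfolding conjm_def by (rule trace_mul_sym)
  also have "\<dots> = trace M"
    by (simp add: matrix_mul_assoc matrix_inv_left assms)
  finally show ?thesis .
qed

lemma conjm_eq_mat_iff:
  assumes "invertible P"
  shows "conjm P M = mat k \<longleftrightarrow> M = mat k"
proof
  assume "conjm P M = mat k"
  then have "P ** M = mat k ** P"
    using assms unfolding conjm_def
    by (metis matrix_inv_left matrix_mul_assoc matrix_mul_rid)
  then have "matrix_inv P ** P ** M = matrix_inv P ** P ** mat k"
    by (metis matrix_mul_assoc matrix_mul_mat_commute)
  then show "M = mat k"
    by (simp add: matrix_inv_left assms)
next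
  assume "M = mat k"
  then show "conjm P M = mat k"
    using assms conjm_eqI matrix_mul_mat_commute by blast
qed

lemma conjm_scalar_iff:
  assumes "invertible P"
  shows "(conjm P M = mat 1 \<or> conjm P M = - mat 1) \<longleftrightarrow> (M = mat 1 \<or> M = - mat 1)"
  by (simp add: uminus_mat conjm_eq_mat_iff assms)

lemma up_to_conj_conjmD:
  assumes "invertible P" "up_to_conj C (conjm P A) (conjm P B)"
  shows "up_to_conj C A B"
  using assms unfolding up_to_conj_def by (metis conjm_conjm invertible_mult)

lemma mat2_cases:
  obtains a b c d where "M = mat2 a b c d"
proof
  show "M = mat2 (M$1$1) (M$1$2) (M$2$1) (M$2$2)"
    unfolding mat2_def by (simp add: vec_eq_iff forall_2)
qed

lemma mat2_eq_iff: "mat2 a b c d = mat2 a' b' c' d' \<longleftrightarrow> a = a' \<and> b = b' \<and> c = c' \<and> d = d'"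
  unfolding mat2_def by (auto simp: vec_eq_iff forall_2)

lemma mat2_mult:
  "mat2 a b c d ** mat2 a' b' c' d' = mat2 (a*a' + b*c') (a*b' + b*d') (c*a' + d*c') (c*b' + d*d')"
  unfolding mat2_def by (simp add: vec_eq_iff forall_2 matrix_matrix_mult_def sum_2)

lemma mat_eq_mat2: "(mat k :: complex^2^2) = mat2 k 0 0 k"
  unfolding mat2_def by (simp add: vec_eq_iff forall_2 mat_def)

lemma uminus_mat2: "- mat2 a b c d = mat2 (-a) (-b) (-c) (-d)"
  unfolding mat2_def by (simp add: vec_eq_iff forall_2)

lemma det_mat2: "det (mat2 a b c d) = a*d - b*c"
  by (simp add: det_2 mat2_def)

lemma trace_mat2: "trace (mat2 a b c d) = a + d"
  by (simp add: trace_def sum_2 mat2_def)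

lemma invertible_mat2_iff: "invertible (mat2 a b c d) \<longleftrightarrow> a*d - b*c \<noteq> 0"
  by (simp add: invertible_det_nz det_mat2)

lemma triangularizable:
  fixes B :: "complex^2^2"
  obtains P l x m where "invertible P" "conjm P B = mat2 l x 0 m"
proof -
  obtain a b c d where B: "B = mat2 a b c d"
    by (rule mat2_cases)
  show ?thesis
  proof (cases "c = 0")
    case True
    have "conjm (mat 1) B = mat2 a b 0 d"
      using B True by (intro conjm_eqI invertible_mat_1) simp
    then show ?thesis
      using that invertible_mat_1 by blast
  next
    case False
    obtain s where s: "s\<^sup>2 = (a + d)\<^sup>2 - 4 * (a*d - b*c)"
      using power2_csqrt by blast
    define l where "l = (a + d + s) / 2"
    have eigen: "l*l - (a + d)*l + (a*d - b*c) = 0"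
      unfolding l_def by (simp add: field_simps power2_eq_square s[unfolded power2_eq_square])
    \<comment> \<open>The columns of the inverse of P are the eigenvector (l - d, c) and (1, 0).\<close>
    define P where "P = mat2 0 (1/c) 1 ((d - l)/c)"
    have "invertible P"
      using False by (simp add: P_def invertible_mat2_iff)
    moreover have "conjm P B = mat2 l 1 0 (a + d - l)"
      using \<open>invertible P\<close> by (rule conjm_eqI)
        (use False eigen in \<open>simp add: P_def B mat2_mult mat2_eq_iff field_simps\<close>)
    ultimately show ?thesis
      using that by blast
  qed
qed

section \<open>Conjugation invariants of the normal forms\<close>

lemma up_to_conj_kb_case1_iff: "up_to_conj kb_case1 A B \<longleftrightarrow> B = mat 1 \<or> B = - mat 1"
proof
  assume "up_to_conj kb_case1 A B"
  then show "B = mat 1 \<or> B = - mat 1"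
    unfolding up_to_conj_def kb_case1_def using conjm_scalar_iff by blast
next
  assume "B = mat 1 \<or> B = - mat 1"
  then show "up_to_conj kb_case1 A B"
    unfolding up_to_conj_def kb_case1_def using conjm_scalar_iff invertible_mat_1 by blast
qed

lemma up_to_conj_kb_case2_invariants:
  assumes "up_to_conj kb_case2 A B"
  shows "\<not> (B = mat 1 \<or> B = - mat 1)" "(trace B)\<^sup>2 \<noteq> 4"
proof -
  obtain P l where P: "invertible P" and l: "l \<noteq> 0" "l \<noteq> 1" "l \<noteq> -1"
    and PB: "conjm P B = mat2 l 0 0 (inverse l) \<or> conjm P B = - mat2 l 0 0 (inverse l)"
    using assms unfolding up_to_conj_def kb_case2_def by blast
  show "\<not> (B = mat 1 \<or> B = - mat 1)"
    using PB l conjm_scalar_iff[OF P, of B]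
    by (auto simp: mat_eq_mat2 uminus_mat2 mat2_eq_iff minus_equation_iff)
  have "trace B = l + inverse l \<or> trace B = - (l + inverse l)"
    using PB trace_conjm[OF P, of B] by (auto simp: trace_mat2 uminus_mat2)
  then have "(trace B)\<^sup>2 = (l + inverse l)\<^sup>2"
    by (metis power2_minus)
  moreover have "(l + inverse l)\<^sup>2 - 4 = (l - inverse l)\<^sup>2"
    using l by (simp add: power2_eq_square field_simps)
  moreover have "l - inverse l \<noteq> 0"
    using l by (auto simp: field_simps square_eq_1_iff)
  ultimately show "(trace B)\<^sup>2 \<noteq> 4"
    by auto
qed

lemma up_to_conj_kb_case3_invariants:
  assumes "up_to_conj kb_case3 A B"
  shows "\<not> (B = mat 1 \<or> B = - mat 1)" "(trace B)\<^sup>2 = 4"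
proof -
  obtain P where P: "invertible P"
    and PB: "conjm P B = mat2 1 1 0 1 \<or> conjm P B = - mat2 1 1 0 1"
    using assms unfolding up_to_conj_def kb_case3_def by blast
  show "\<not> (B = mat 1 \<or> B = - mat 1)"
    using PB conjm_scalar_iff[OF P, of B] by (auto simp: mat_eq_mat2 uminus_mat2 mat2_eq_iff)
  show "(trace B)\<^sup>2 = 4"
    using PB trace_conjm[OF P, of B] by (auto simp: trace_mat2 uminus_mat2)
qed

section \<open>The Klein bottle relation\<close>

definition klein_rep :: "complex^2^2 \<Rightarrow> complex^2^2 \<Rightarrow> bool" where
  "klein_rep A B \<longleftrightarrow> det A = 1 \<and> det B = 1 \<and> B ** A ** B = A"

lemma klein_repI:
  assumes "det A = 1" "det B = 1" "A ** B ** matrix_inv A = matrix_inv B"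
  shows "klein_rep A B"
proof -
  have A: "invertible A" and B: "invertible B"
    using assms(1,2) by (simp_all add: invertible_det_nz)
  have "B ** A ** B = B ** (A ** B ** matrix_inv A) ** A"
    by (simp add: matrix_mul_assoc[symmetric] matrix_inv_left[OF A])
  also have "\<dots> = A"
    by (simp add: assms(3) matrix_mul_assoc matrix_inv_right[OF B])
  finally show ?thesis
    using assms(1,2) unfolding klein_rep_def by blast
qed

lemma klein_rep_conjm:
  assumes "klein_rep A B" "invertible P"
  shows "klein_rep (conjm P A) (conjm P B)"
  using assms unfolding klein_rep_def by (simp add: det_conjm conjm_mul[symmetric])

lemma klein_rep_mat2:
  "klein_rep (mat2 p q r u) (mat2 a b c d) \<longleftrightarrow>
     p*u - q*r = 1 \<and> a*d - b*c = 1 \<and>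
     mat2 a b c d ** mat2 p q r u ** mat2 a b c d = mat2 p q r u"
  unfolding klein_rep_def by (simp add: det_mat2)

lemma klein_rep_diagonal:
  assumes rep: "klein_rep A (mat2 l 0 0 m)" and "l \<noteq> m"
  shows "up_to_conj kb_case2 A (mat2 l 0 0 m)"
proof -
  obtain p q r u where A: "A = mat2 p q r u"
    by (rule mat2_cases)
  have det: "p*u - q*r = 1" "l*m = 1"
    and rel: "l*l*p = p" "m*m*u = u"
    using rep unfolding A klein_rep_mat2 by (auto simp: mat2_mult mat2_eq_iff algebra_simps)
  have "l*l \<noteq> 1" "m*m \<noteq> 1"
    using det(2) \<open>l \<noteq> m\<close> by (metis mult.commute mult.left_commute mult_1_right)+
  then have "p = 0" "u = 0"
    using rel by auto
  then have qr: "q*r = -1"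
    using det(1) by (simp add: minus_equation_iff)
  define P where "P = mat2 1 0 0 q"
  have "invertible P"
    using qr by (auto simp: P_def invertible_mat2_iff)
  moreover have "conjm P A = mat2 0 1 (-1) 0"
    using \<open>invertible P\<close> by (rule conjm_eqI)
      (simp add: P_def A \<open>p = 0\<close> \<open>u = 0\<close> qr mat2_mult mat2_eq_iff)
  moreover have "conjm P (mat2 l 0 0 m) = mat2 l 0 0 m"
    using \<open>invertible P\<close> by (rule conjm_eqI) (simp add: P_def mat2_mult mat2_eq_iff)
  moreover have "l \<noteq> 0" "l \<noteq> 1" "l \<noteq> -1"
    using det(2) \<open>l*l \<noteq> 1\<close> by auto
  moreover have "m = inverse l"
    using inverse_unique[OF det(2)] by simp
  ultimately show ?thesis
    unfolding up_to_conj_def kb_case2_def by blast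
qed

lemma klein_rep_unipotent:
  assumes rep: "klein_rep A (mat2 l l 0 l)"
  shows "up_to_conj kb_case3 A (mat2 l l 0 l)"
proof -
  obtain p q r u where A: "A = mat2 p q r u"
    by (rule mat2_cases)
  have "l*l = 1"
    using rep unfolding A klein_rep_mat2 by simp
  then have l: "l = 1 \<or> l = -1"
    by (simp add: square_eq_1_iff)
  have det: "p*u - q*r = 1" and "r = 0" "u = -p"
    using rep l unfolding A klein_rep_mat2
    by (auto simp: mat2_mult mat2_eq_iff algebra_simps add_eq_0_iff)
  then have "p\<^sup>2 = \<i>\<^sup>2"
    by (simp add: power2_eq_square minus_equation_iff)
  then have p: "p = \<i> \<or> p = -\<i>"
    by (metis power2_eq_iff)
  define P where "P = mat2 1 (q / (2*p)) 0 1"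
  have "invertible P"
    by (simp add: P_def invertible_mat2_iff)
  moreover have "conjm P A = mat2 p 0 0 (-p)"
    using \<open>invertible P\<close> by (rule conjm_eqI)
      (use p in \<open>auto simp: P_def A \<open>r = 0\<close> \<open>u = -p\<close> mat2_mult mat2_eq_iff field_simps\<close>)
  moreover have "conjm P (mat2 l l 0 l) = mat2 l l 0 l"
    using \<open>invertible P\<close> by (rule conjm_eqI) (simp add: P_def mat2_mult mat2_eq_iff algebra_simps)
  ultimately show ?thesis
    using l p unfolding up_to_conj_def kb_case3_def by (auto simp: uminus_mat2)
qed

lemma klein_rep_upper_triangular:
  assumes rep: "klein_rep A (mat2 l x 0 m)"
    and not_scalar: "\<not> (mat2 l x 0 m = mat 1 \<or> mat2 l x 0 m = - mat 1)"
  shows "up_to_conj kb_case2 A (mat2 l x 0 m) \<or> up_to_conj kb_case3 A (mat2 l x 0 m)"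
proof (cases "l = m")
  case False
  define P where "P = mat2 1 (x / (l - m)) 0 1"
  have "invertible P"
    by (simp add: P_def invertible_mat2_iff)
  moreover have "conjm P (mat2 l x 0 m) = mat2 l 0 0 m"
    using \<open>invertible P\<close> by (rule conjm_eqI)
      (use False in \<open>simp add: P_def mat2_mult mat2_eq_iff field_simps\<close>)
  ultimately have "up_to_conj kb_case2 (conjm P A) (conjm P (mat2 l x 0 m))"
    using klein_rep_diagonal klein_rep_conjm[OF rep] False by metis
  then show ?thesis
    using up_to_conj_conjmD[OF \<open>invertible P\<close>] by blast
next
  case True
  have "l*l = 1"
    using rep True unfolding klein_rep_def by (simp add: det_mat2)
  then have "x \<noteq> 0"
    using not_scalar True by (auto simp: square_eq_1_iff mat_eq_mat2 uminus_mat2)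
  define P where "P = mat2 l 0 0 x"
  have "invertible P"
    using \<open>l*l = 1\<close> \<open>x \<noteq> 0\<close> by (auto simp: P_def invertible_mat2_iff)
  moreover have "conjm P (mat2 l x 0 m) = mat2 l l 0 l"
    using \<open>invertible P\<close> by (rule conjm_eqI) (simp add: P_def True mat2_mult mat2_eq_iff)
  ultimately have "up_to_conj kb_case3 (conjm P A) (conjm P (mat2 l x 0 m))"
    using klein_rep_unipotent klein_rep_conjm[OF rep] by metis
  then show ?thesis
    using up_to_conj_conjmD[OF \<open>invertible P\<close>] by blast
qed

lemma klein_rep_normal_form:
  assumes rep: "klein_rep A B"
  shows "up_to_conj kb_case1 A B \<or> up_to_conj kb_case2 A B \<or> up_to_conj kb_case3 A B"
proof (cases "B = mat 1 \<or> B = - mat 1")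
  case True
  then show ?thesis
    using up_to_conj_kb_case1_iff by blast
next
  case False
  obtain P l x m where P: "invertible P" and PB: "conjm P B = mat2 l x 0 m"
    by (rule triangularizable)
  have "klein_rep (conjm P A) (mat2 l x 0 m)"
    using klein_rep_conjm[OF rep P] PB by simp
  moreover have "\<not> (mat2 l x 0 m = mat 1 \<or> mat2 l x 0 m = - mat 1)"
    using False conjm_scalar_iff[OF P, of B] PB by simp
  ultimately show ?thesis
    using klein_rep_upper_triangular up_to_conj_conjmD[OF P] PB by metis
qed

theorem lemma4p1:
  fixes A B :: "complex^2^2"
  assumes "det A = 1" and "det B = 1"
    and "A ** B ** matrix_inv A = matrix_inv B"
  shows "(up_to_conj kb_case1 A B \<and> \<not> up_to_conj kb_case2 A B \<and> \<not> up_to_conj kb_case3 A B) \<or>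
         (\<not> up_to_conj kb_case1 A B \<and> up_to_conj kb_case2 A B \<and> \<not> up_to_conj kb_case3 A B) \<or>
         (\<not> up_to_conj kb_case1 A B \<and> \<not> up_to_conj kb_case2 A B \<and> up_to_conj kb_case3 A B)"
  using klein_rep_normal_form[OF klein_repI[OF assms]] up_to_conj_kb_case1_iff[of A B]
    up_to_conj_kb_case2_invariants[of A B] up_to_conj_kb_case3_invariants[of A B]
  by blast

end
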